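(* Let $K$ be a number field, let $X\subseteq M_d(K)$ be closed in the linear Zariski topology, and let $\mathcal S=\langle X\rangle$. Let $r\ge0$ and let $Y,T\subseteq M_d(K)$ be closed sets such that $X\cup\{B\in\mathcal S:\operatorname{rank}(B)>r\}\subseteq Y$, and set $Y'\coloneqq\overline{(Y\cup T)^{\le 2\binom{d}{r}+3}}$. If there exists $A=A_1\cdots A_n\in\mathcal S\setminus Y'$ with $A_1,\ldots,A_n\in X$ and $\operatorname{rank}(A)\ge r$, then there exist $k<l$ such that the subproduct $A'=A_k\cdots A_l$ is completely pseudo-regular of rank $r$ and not contained in $Y\cup T$.
   Context: The linear Zariski topology on $M_d(K)$ has as closed sets the finite unions of vector subspaces, and $\overline{\,\cdot\,}$ denotes closure in it. $\langle X\rangle$ is the subsemigroup generated by $X$. For $Z\subseteq M_d(K)$ and $n\ge1$, $Z^{\le n}=\{C_1\cdots C_k: k\in[1,n], C_1,\ldots,C_k\in Z\}$. A matrix $C$ is completely pseudo-regular if it lies in a subgroup of the multiplicative semigroup $M_d(K)$ (equivalently $\operatorname{im}C\cap\ker C=0$). *)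

theory Defs
  imports "HOL-Analysis.Analysis"
begin

definition number_field :: "'a::field_char_0 itself \<Rightarrow> bool" where
  "number_field _ \<longleftrightarrow> (\<exists>B::'a set. finite B \<and>
      (\<forall>x::'a. \<exists>c::'a \<Rightarrow> rat. x = (\<Sum>b\<in>B. of_rat (c b) * b)))"

definition mscale :: "'a::field \<Rightarrow> 'a^'n^'n \<Rightarrow> 'a^'n^'n" where
  "mscale c A = (\<chi> i j. c * A $ i $ j)"

definition msubspace :: "('a::field^'n^'n) set \<Rightarrow> bool" where
  "msubspace V \<longleftrightarrow> 0 \<in> V \<and> (\<forall>A\<in>V. \<forall>B\<in>V. A + B \<in> V) \<and>
      (\<forall>c. \<forall>A\<in>V. mscale c A \<in> V)"

text \<open>Closed sets of the linear Zariski topology: finite unions of vector subspaces.\<close>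
definition lz_closed :: "('a::field^'n^'n) set \<Rightarrow> bool" where
  "lz_closed Z \<longleftrightarrow> (\<exists>F. finite F \<and> (\<forall>V\<in>F. msubspace V) \<and> Z = \<Union>F)"

definition lz_closure :: "('a::field^'n^'n) set \<Rightarrow> ('a^'n^'n) set" where
  "lz_closure Z = \<Inter>{C. lz_closed C \<and> Z \<subseteq> C}"

definition mprod :: "('a::field^'n^'n) list \<Rightarrow> 'a^'n^'n" where
  "mprod xs = foldr (\<lambda>A B. A ** B) xs (mat 1)"

definition gen_semigroup :: "('a::field^'n^'n) set \<Rightarrow> ('a^'n^'n) set" where
  "gen_semigroup X = {mprod xs | xs. xs \<noteq> [] \<and> set xs \<subseteq> X}"

definition prods_le :: "('a::field^'n^'n) set \<Rightarrow> nat \<Rightarrow> ('a^'n^'n) set" where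
  "prods_le Z n = {mprod xs | xs. xs \<noteq> [] \<and> length xs \<le> n \<and> set xs \<subseteq> Z}"

definition is_subgroup_mult :: "('a::field^'n^'n) set \<Rightarrow> bool" where
  "is_subgroup_mult G \<longleftrightarrow> (\<forall>A\<in>G. \<forall>B\<in>G. A ** B \<in> G) \<and>
     (\<exists>e\<in>G. (\<forall>A\<in>G. e ** A = A \<and> A ** e = A) \<and>
            (\<forall>A\<in>G. \<exists>B\<in>G. A ** B = e \<and> B ** A = e))"

definition completely_pseudo_regular :: "'a::field^'n^'n \<Rightarrow> bool" where
  "completely_pseudo_regular C \<longleftrightarrow> (\<exists>G. is_subgroup_mult G \<and> C \<in> G)"

end

(*
  Suppose no such subproduct exists. Every subproduct of A = A_1 ... A_n has rank at least
  rank A, and rank A = r since otherwise A would lie in Y. Cut A_1 ... A_n greedily into maximal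
  segments whose products lie in Y \<union> T; as A is not in Y', there are more than
  2 (d choose r) + 3 of them. By maximality, the product M of two or more consecutive segments
  lies outside Y \<union> T, so it has rank exactly r and, by assumption, is not completely
  pseudo-regular: im M \<inter> ker M \<noteq> 0. Writing P_s and S_s for the prefix and the suffix of A
  at the s-th cut, the subspaces U_k = im P_(2k+2) and W_k = ker S_(2k+2) then satisfy
  U_k \<inter> W_k = 0 and U_l \<inter> W_k \<noteq> 0 for k < l, which by Lovasz's theorem on skew pairs of
  subspaces allows at most (d choose r) indices k, a contradiction.
*)
theory Submission
  imports Defs
begin

section \<open>Row spaces and left null spaces\<close>

text \<open>Matrices act on row vectors, \<open>x \<mapsto> x M\<close>, matching \<open>rank M = dim (rows M)\<close>; the image and
  kernel of the paper are \<open>row_space\<close> and \<open>left_null_space\<close>.\<close>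
definition row_space :: "'a::field^'n^'n \<Rightarrow> ('a^'n) set" where
  "row_space M = range (\<lambda>x. x v* M)"

definition left_null_space :: "'a::field^'n^'n \<Rightarrow> ('a^'n) set" where
  "left_null_space M = {x. x v* M = 0}"

lemma linear_vector_matrix_mult: "Vector_Spaces.linear (*s) (*s) (\<lambda>x. x v* (M::'a::field^'n^'n))"
proof -
  have "(\<lambda>x. x v* M) = (\<lambda>x. transpose M *v x)"
    by simp
  then show ?thesis
    by (simp only: matrix_vector_mul_linear_gen)
qed

lemma axis_vector_matrix_mult: "axis i 1 v* (M::'a::field^'n^'n) = row i M"
  unfolding vec_eq_iff vector_matrix_mult_def row_def axis_def
  by (simp add: if_distrib[of "\<lambda>a. a * b" for b] cong: if_cong)

lemma matrix_eqI_vector_matrix_mult: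
  assumes "\<And>x. x v* A = x v* (B::'a::field^'n^'n)"
  shows "A = B"
  using assms[of "axis _ 1"] by (simp add: axis_vector_matrix_mult vec_eq_iff row_def)

lemma subspace_row_space: "vec.subspace (row_space (M::'a::field^'n^'n))"
  unfolding row_space_def by (rule vec.linear_subspace_image[OF linear_vector_matrix_mult vec.subspace_UNIV])

lemma subspace_left_null_space: "vec.subspace (left_null_space (M::'a::field^'n^'n))"
  unfolding left_null_space_def by (rule vec.linear_subspace_kernel[OF linear_vector_matrix_mult])

lemma row_space_eq_span_rows: "row_space (M::'a::field^'n^'n) = vec.span (rows M)"
proof
  show "row_space M \<subseteq> vec.span (rows M)"
    using matrix_vector_mult_in_columnspace_gen[of "transpose M"] by (auto simp: row_space_def)
  have "rows M \<subseteq> row_space M"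
    by (auto simp: rows_def row_space_def axis_vector_matrix_mult[symmetric])
  then show "vec.span (rows M) \<subseteq> row_space M"
    by (rule vec.span_minimal[OF _ subspace_row_space])
qed

lemma rank_eq_dim_row_space: "rank (M::'a::field^'n^'n) = vec.dim (row_space M)"
  unfolding row_rank_def_gen row_space_eq_span_rows by simp

lemma rank_le_card: "rank (M::'a::field^'n^'n) \<le> CARD('n)"
  unfolding rank_eq_dim_row_space by (rule dim_subset_UNIV_cart_gen)

lemma exists_complement_subspace:
  fixes K :: "('a::field^'n) set"
  assumes "vec.subspace K"
  obtains C where "vec.subspace C" "K \<inter> C \<subseteq> {0}" "\<And>x. \<exists>a\<in>K. \<exists>b\<in>C. x = a + b"
    "vec.dim K + vec.dim C = CARD('n)"
proof -
  obtain B0 where B0: "B0 \<subseteq> K" "vec.independent B0" "K \<subseteq> vec.span B0" "card B0 = vec.dim K"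
    by (rule vec.basis_exists[of K]) simp
  obtain B where B: "B0 \<subseteq> B" "vec.independent B" "UNIV \<subseteq> vec.span B"
    by (rule vec.maximal_independent_subset_extend[of B0 UNIV, OF _ B0(2)]) simp_all
  have "finite B"
    using B(2) vec.finiteI_independent by blast
  have card_B: "card B = CARD('n)"
    using vec.basis_card_eq_dim[of B UNIV] B vec_dim_card by auto
  define C where "C = vec.span (B - B0)"
  have span_B0: "vec.span B0 = K"
    using B0 assms vec.span_minimal by blast
  have dim_C: "vec.dim C = card B - card B0"
    using B vec.independent_mono[of B "B - B0"] \<open>finite B\<close>
    by (simp add: C_def vec.dim_eq_card_independent card_Diff_subset finite_subset)
  have sums: "vec.span B = {a + b |a b. a \<in> K \<and> b \<in> C}"
    using vec.span_Un[of B0 "B - B0"] B(1) span_B0 by (simp add: C_def Un_absorb1)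
  have "vec.dim {a + b |a b. a \<in> K \<and> b \<in> C} + vec.dim (K \<inter> C) = vec.dim K + vec.dim C"
    by (rule vec.dim_sums_Int) (auto simp: C_def assms)
  moreover have "vec.dim (vec.span B) = card B"
    using B(2) vec.dim_span_eq_card_independent by blast
  moreover have "card B0 \<le> card B"
    using B(1) \<open>finite B\<close> card_mono by blast
  ultimately have "vec.dim (K \<inter> C) = 0"
    using sums dim_C B0(4) by simp
  then have "K \<inter> C \<subseteq> {0}"
    by simp
  moreover have "\<And>x. \<exists>a\<in>K. \<exists>b\<in>C. x = a + b"
    using B(3) sums by blast
  moreover have "vec.dim K + vec.dim C = CARD('n)"
    using dim_C B0(4) card_B \<open>card B0 \<le> card B\<close> by simp
  ultimately show ?thesis
    using that[of C] by (simp add: C_def)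
qed

lemma dim_kernel_add_dim_range:
  fixes f :: "'a::field^'n \<Rightarrow> 'a^'n"
  assumes f: "Vector_Spaces.linear (*s) (*s) f"
  shows "vec.dim {x. f x = 0} + vec.dim (range f) = CARD('n)"
proof -
  obtain C where C: "vec.subspace C" "{x. f x = 0} \<inter> C \<subseteq> {0}"
    "\<And>x. \<exists>a\<in>{x. f x = 0}. \<exists>b\<in>C. x = a + b" "vec.dim {x. f x = 0} + vec.dim C = CARD('n)"
    using exists_complement_subspace[OF vec.linear_subspace_kernel[OF f]] by blast
  have "inj_on f C"
    using C(2) vec.linear_inj_on_iff_eq_0[OF f C(1)] by blast
  moreover have "vec.span C = C"
    using C(1) by simp
  ultimately have "vec.dim (f ` C) = vec.dim C"
    using vec.dim_image_eq[OF f, of C] by metis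
  moreover have "f ` C = range f"
  proof
    show "range f \<subseteq> f ` C"
    proof
      fix y assume "y \<in> range f"
      then obtain x a b where "y = f x" "x = a + b" "f a = 0" "b \<in> C"
        using C(3) by blast
      then show "y \<in> f ` C"
        by (simp add: vec.linear_add[OF f])
    qed
  qed blast
  ultimately show ?thesis
    using C(4) by simp
qed

lemma dim_left_null_space: "vec.dim (left_null_space M) = CARD('n) - rank (M::'a::field^'n^'n)"
  using dim_kernel_add_dim_range[OF linear_vector_matrix_mult, of M]
  by (simp add: left_null_space_def rank_eq_dim_row_space row_space_def)

lemma row_space_mult_subset: "row_space (A ** B) \<subseteq> row_space (B::'a::field^'n^'n)"
  unfolding row_space_def by (auto simp flip: vector_matrix_mul_assoc)

lemma left_null_space_mult_subset: "left_null_space A \<subseteq> left_null_space (A ** (B::'a::field^'n^'n))"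
  unfolding left_null_space_def by (auto simp flip: vector_matrix_mul_assoc)

lemma rank_mul_le_right_gen:
  fixes A B :: "'a::field^'n^'n"
  shows "rank (A ** B) \<le> rank B"
  unfolding rank_eq_dim_row_space by (rule vec.dim_subset[OF row_space_mult_subset])

lemma rank_mul_le_left_gen:
  fixes A B :: "'a::field^'n^'n"
  shows "rank (A ** B) \<le> rank A"
proof -
  have "row_space (A ** B) = (\<lambda>x. x v* B) ` row_space A"
    unfolding row_space_def by (auto simp: image_image simp flip: vector_matrix_mul_assoc)
  then show ?thesis
    unfolding rank_eq_dim_row_space by (simp add: vec.dim_image_le[OF linear_vector_matrix_mult])
qed

lemma row_space_mult_eq:
  "rank (L ** M) = rank M \<Longrightarrow> row_space (L ** M) = row_space (M::'a::field^'n^'n)"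
  by (rule vec.subspace_dim_equal[OF subspace_row_space subspace_row_space row_space_mult_subset])
    (simp add: rank_eq_dim_row_space)

lemma left_null_space_mult_eq:
  "rank (M ** R) = rank M \<Longrightarrow> left_null_space (M ** R) = left_null_space (M::'a::field^'n^'n)"
  by (rule vec.subspace_dim_equal[OF subspace_left_null_space subspace_left_null_space
        left_null_space_mult_subset, symmetric]) (simp add: dim_left_null_space)

lemma row_space_inter_left_null_space_mult:
  assumes "rank (P ** S) = rank (P::'a::field^'n^'n)"
  shows "row_space P \<inter> left_null_space S \<subseteq> {0}"
proof
  fix z assume z: "z \<in> row_space P \<inter> left_null_space S"
  then obtain x where x: "z = x v* P"
    unfolding row_space_def by blast
  then have "x \<in> left_null_space (P ** S)"
    using z by (simp add: left_null_space_def flip: vector_matrix_mul_assoc)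
  then have "x \<in> left_null_space P"
    using left_null_space_mult_eq[OF assms] by simp
  then show "z \<in> {0}"
    by (simp add: x left_null_space_def)
qed

section \<open>Completely pseudo-regular matrices\<close>

lemma completely_pseudo_regularI:
  fixes C e N :: "'a::field^'n^'n"
  assumes "C ** e = C" "e ** C = C" and Ne: "N ** e = N" and "e ** N = N"
    and CN: "C ** N = e" and "N ** C = e"
  shows "completely_pseudo_regular C"
proof -
  \<comment> \<open>the group of units of the monoid \<open>e M\<^sub>d(K) e\<close>\<close>
  define H where "H = {M. M ** e = M \<and> e ** M = M \<and>
    (\<exists>M'. M' ** e = M' \<and> e ** M' = M' \<and> M ** M' = e \<and> M' ** M = e)}"
  have ee: "e ** e = e"
    using CN Ne by (metis matrix_mul_assoc)
  have closed: "A ** B \<in> H" if "A \<in> H" "B \<in> H" for A B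
  proof -
    obtain A' B' where A: "A ** e = A" "e ** A = A" "A' ** e = A'" "e ** A' = A'" "A ** A' = e" "A' ** A = e"
      and B: "B ** e = B" "e ** B = B" "B' ** e = B'" "e ** B' = B'" "B ** B' = e" "B' ** B = e"
      using \<open>A \<in> H\<close> \<open>B \<in> H\<close> unfolding H_def by blast
    have "(A ** B) ** e = A ** B" "(B' ** A') ** e = B' ** A'"
      using A B by (simp_all flip: matrix_mul_assoc)
    moreover have "e ** (A ** B) = A ** B" "e ** (B' ** A') = B' ** A'"
      using A B by (simp_all add: matrix_mul_assoc)
    moreover have "(A ** B) ** (B' ** A') = A ** ((B ** B') ** A')"
      and "(B' ** A') ** (A ** B) = B' ** ((A' ** A) ** B)"
      by (simp_all add: matrix_mul_assoc)
    ultimately show ?thesis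
      unfolding H_def using A B by (intro CollectI conjI exI[of _ "B' ** A'"]) simp_all
  qed
  have inverse: "\<exists>B\<in>H. A ** B = e \<and> B ** A = e" if "A \<in> H" for A
  proof -
    obtain A' where "A ** e = A" "e ** A = A" "A' ** e = A'" "e ** A' = A'" "A ** A' = e" "A' ** A = e"
      using \<open>A \<in> H\<close> unfolding H_def by blast
    then show ?thesis
      unfolding H_def by blast
  qed
  have "e \<in> H" "\<forall>A\<in>H. e ** A = A \<and> A ** e = A"
    unfolding H_def using ee by blast+
  then have "is_subgroup_mult H"
    unfolding is_subgroup_mult_def using closed inverse by blast
  moreover have "C \<in> H"
    unfolding H_def using assms by blast
  ultimately show ?thesis
    unfolding completely_pseudo_regular_def by blast
qed

text \<open>If \<open>g\<close> is a linear left inverse of \<open>x \<mapsto> x C\<close> on the row space \<open>U\<close> (where this map is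
  bijective) and \<open>G\<close> its matrix, then \<open>C G\<close> is the projection onto \<open>U\<close> along the left null space
  and \<open>C G G\<close> is the group inverse of \<open>C\<close>.\<close>
lemma completely_pseudo_regularI_row_space:
  fixes C :: "'a::field^'n^'n"
  assumes "row_space C \<inter> left_null_space C \<subseteq> {0}"
  shows "completely_pseudo_regular C"
proof -
  define f where "f = (\<lambda>x::'a^'n. x v* C)"
  define U where "U = row_space C"
  have f: "Vector_Spaces.linear (*s) (*s) f"
    unfolding f_def by (rule linear_vector_matrix_mult)
  have U: "vec.subspace U"
    unfolding U_def by (rule subspace_row_space)
  have fU: "f x \<in> U" for x
    unfolding U_def row_space_def f_def by blast
  have inj: "inj_on f U"
    using assms vec.linear_inj_on_iff_eq_0[OF f U] unfolding U_def left_null_space_def f_def by blast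
  obtain g where g: "range g \<subseteq> U" "Vector_Spaces.linear (*s) (*s) g" "\<And>v. v \<in> U \<Longrightarrow> g (f v) = v"
    using vec.linear_exists_left_inverse_on[OF f U inj] by blast
  have "vec.span U = U"
    using U by simp
  then have "vec.dim (f ` U) = vec.dim U"
    using vec.dim_image_eq[OF f, of U] inj by metis
  then have "f ` U = U"
    using vec.subspace_dim_equal[OF vec.linear_subspace_image[OF f U] U] fU by (simp add: image_subsetI)
  then have fg: "f (g u) = u" if "u \<in> U" for u
    using that g(3) by force
  define G where "G = transpose (matrix g)"
  have G: "x v* G = g x" for x
    unfolding G_def using matrix_works[OF g(2)] by simp
  have gU: "g x \<in> U" for x
    using g(1) by blast
  have C: "x v* C = f x" for x
    by (simp add: f_def)
  note simps = vector_matrix_mul_assoc[symmetric] G C fg gU fU g(3)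
  show ?thesis
  proof (rule completely_pseudo_regularI[of C "C ** G" "C ** G ** G"])
    show "C ** (C ** G) = C" "C ** G ** C = C" "C ** G ** G ** (C ** G) = C ** G ** G"
      "C ** G ** (C ** G ** G) = C ** G ** G" "C ** (C ** G ** G) = C ** G" "C ** G ** G ** C = C ** G"
      by (rule matrix_eqI_vector_matrix_mult; simp add: simps)+
  qed
qed

section \<open>Alternating forms and skew pairs of subspaces\<close>

locale alternating_form =
  fixes Phi :: "('n::finite \<Rightarrow> 'a::field^'n) \<Rightarrow> 'a" and P :: "'n set"
  assumes depends_on_P: "\<And>y z. (\<And>p. p \<in> P \<Longrightarrow> y p = z p) \<Longrightarrow> Phi y = Phi z"
    and additive: "\<And>p y a b. p \<in> P \<Longrightarrow> Phi (y(p := a + b)) = Phi (y(p := a)) + Phi (y(p := b))"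
    and homogeneous: "\<And>p y c a. p \<in> P \<Longrightarrow> Phi (y(p := c *s a)) = c * Phi (y(p := a))"
    and alternating: "\<And>p q y. p \<in> P \<Longrightarrow> q \<in> P \<Longrightarrow> p \<noteq> q \<Longrightarrow> y p = y q \<Longrightarrow> Phi y = 0"
begin

lemma swap_rows:
  assumes p: "p \<in> P" and q: "q \<in> P" and "p \<noteq> q"
  shows "Phi (y \<circ> Transposition.transpose p q) = - Phi y"
proof -
  define a b where "a = y p" and "b = y q"
  have "Phi ((y(p := a))(q := a)) = 0" "Phi ((y(p := b))(q := b)) = 0"
    using alternating[OF p q \<open>p \<noteq> q\<close>] \<open>p \<noteq> q\<close> by simp_all
  moreover have "(y(p := a))(q := b) = y"
    by (simp add: a_def b_def fun_eq_iff)
  moreover have "(y(p := b))(q := a) = y \<circ> Transposition.transpose p q"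
    using \<open>p \<noteq> q\<close> by (auto simp: a_def b_def fun_eq_iff Transposition.transpose_def)
  moreover have "0 = Phi ((y(p := a + b))(q := a + b))"
    using alternating[OF p q \<open>p \<noteq> q\<close>] by simp
  ultimately have "Phi (y \<circ> Transposition.transpose p q) + Phi y = 0"
    using \<open>p \<noteq> q\<close> by (simp add: additive[OF p] additive[OF q] fun_upd_twist)
  then show ?thesis
    by (simp add: eq_neg_iff_add_eq_0)
qed

lemma permute_eq_0:
  assumes "s permutes P" and "Phi y = 0"
  shows "Phi (y \<circ> s) = 0"
proof -
  have "\<forall>y. Phi y = 0 \<longrightarrow> Phi (y \<circ> s) = 0"
    using assms(1) finite
  proof (induction rule: permutes_induct)
    case (swap a b s)
    show ?case
    proof (intro allI impI)
      fix y assume "Phi y = 0"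
      then have "Phi (y \<circ> Transposition.transpose a b) = 0"
        using swap_rows[of a b y] swap.hyps by simp
      then show "Phi (y \<circ> (Transposition.transpose a b \<circ> s)) = 0"
        using swap.IH by (metis o_assoc)
    qed
  qed simp
  then show ?thesis
    using assms(2) by blast
qed

lemma update_zero: "p \<in> P \<Longrightarrow> Phi (y(p := 0)) = 0"
  using homogeneous[of p y 0 0] by (simp only: vector_smult_lzero mult_zero_left)

lemma update_sum:
  assumes p: "p \<in> P" and "finite J"
  shows "Phi (y(p := (\<Sum>j\<in>J. c j *s v j))) = (\<Sum>j\<in>J. c j * Phi (y(p := v j)))"
  using \<open>finite J\<close>
proof (induction J rule: finite_induct)
  case empty
  then show ?case
    using update_zero[OF p] by (simp only: sum.empty)
next
  case (insert j J)
  have "Phi (y(p := (\<Sum>j\<in>insert j J. c j *s v j))) = Phi (y(p := c j *s v j + (\<Sum>j\<in>J. c j *s v j)))"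
    using insert.hyps by simp
  also have "\<dots> = c j * Phi (y(p := v j)) + (\<Sum>j\<in>J. c j * Phi (y(p := v j)))"
    by (simp only: additive[OF p] homogeneous[OF p] insert.IH)
  also have "\<dots> = (\<Sum>j\<in>insert j J. c j * Phi (y(p := v j)))"
    using insert.hyps by simp
  finally show ?case .
qed

context
  fixes enum :: "'n set \<Rightarrow> 'n \<Rightarrow> 'n"
  assumes enum: "\<And>S. card S = card P \<Longrightarrow> bij_betw (enum S) P S"
    and eq_0_on_enum: "\<And>S. card S = card P \<Longrightarrow> Phi (\<lambda>p. axis (enum S p) 1) = 0"
begin

lemma eq_0_on_unit_vectors: "Phi (\<lambda>p. axis (g p) 1) = 0"
proof (cases "inj_on g P")
  case False
  then obtain p q where "p \<in> P" "q \<in> P" "p \<noteq> q" "g p = g q"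
    unfolding inj_on_def by blast
  then show ?thesis
    by (intro alternating[of p q]) auto
next
  case True
  define S where "S = g ` P"
  have "card S = card P"
    unfolding S_def using True card_image by blast
  then have h: "bij_betw (enum S) P S"
    by (rule enum)
  define s where "s p = (if p \<in> P then inv_into P (enum S) (g p) else p)" for p
  have "bij_betw g P S"
    using True by (simp add: S_def bij_betw_def)
  then have "bij_betw (inv_into P (enum S) \<circ> g) P P"
    using bij_betw_inv_into[OF h] by (rule bij_betw_trans)
  then have "bij_betw s P P"
    unfolding s_def by (rule bij_betw_cong[THEN iffD1, rotated]) auto
  then have "s permutes P"
    by (rule bij_imp_permutes) (simp add: s_def)
  then have "Phi ((\<lambda>p. axis (enum S p) 1) \<circ> s) = 0"
    using permute_eq_0 eq_0_on_enum[OF \<open>card S = card P\<close>] by blast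
  moreover have "Phi ((\<lambda>p. axis (enum S p) 1) \<circ> s) = Phi (\<lambda>p. axis (g p) 1)"
  proof (rule depends_on_P)
    fix p assume p: "p \<in> P"
    then have "g p \<in> enum S ` P"
      using h unfolding bij_betw_def S_def by auto
    then show "((\<lambda>p. axis (enum S p) 1) \<circ> s) p = axis (g p) 1"
      using p by (simp add: s_def f_inv_into_f)
  qed
  ultimately show ?thesis
    by simp
qed

lemma eq_0_if_eq_0_on_enum: "Phi y = 0"
proof -
  have "F \<subseteq> P \<Longrightarrow> \<forall>y. (\<forall>p\<in>P - F. \<exists>j. y p = axis j 1) \<longrightarrow> Phi y = 0" for F
  proof (induction F rule: finite_induct[OF finite])
    case 1
    show ?case
    proof (intro allI impI)
      fix y :: "'n \<Rightarrow> 'a^'n"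
      assume "\<forall>p\<in>P - {}. \<exists>j. y p = axis j 1"
      then have "Phi y = Phi (\<lambda>p. axis (SOME j. y p = axis j 1) 1)"
        by (intro depends_on_P) (auto intro: someI_ex)
      then show "Phi y = 0"
        using eq_0_on_unit_vectors by simp
    qed
  next
    case (2 q F)
    show ?case
    proof (intro allI impI)
      fix y :: "'n \<Rightarrow> 'a^'n"
      assume y: "\<forall>p\<in>P - insert q F. \<exists>j. y p = axis j 1"
      have "q \<in> P"
        using "2.prems" by blast
      have "y = y(q := (\<Sum>j\<in>UNIV. (y q $ j) *s axis j 1))"
        by (simp add: basis_expansion)
      then have "Phi y = (\<Sum>j\<in>UNIV. (y q $ j) * Phi (y(q := axis j 1)))"
        using update_sum[OF \<open>q \<in> P\<close> finite] by metis
      moreover have "\<forall>y. (\<forall>p\<in>P - F. \<exists>j. y p = axis j 1) \<longrightarrow> Phi y = 0"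
        using "2.IH" "2.prems" by blast
      moreover have "\<forall>p\<in>P - F. \<exists>j'. (y(q := axis j 1)) p = axis j' 1" for j
        using y by auto
      ultimately show "Phi y = 0"
        by simp
    qed
  qed
  then show ?thesis
    by blast
qed

end

end

definition merge_rows :: "'n set \<Rightarrow> ('n::finite \<Rightarrow> 'a^'n) \<Rightarrow> ('n \<Rightarrow> 'a^'n) \<Rightarrow> 'a^'n^'n" where
  "merge_rows P y z = (\<chi> i. if i \<in> P then y i else z i)"

lemma alternating_form_det_merge_rows:
  fixes z :: "nat \<Rightarrow> 'n::finite \<Rightarrow> 'a::field^'n"
  shows "alternating_form (\<lambda>y. \<Sum>k\<in>K. c k * det (merge_rows P y (z k))) P"
proof
  fix y y' :: "'n \<Rightarrow> 'a^'n"
  assume "\<And>p. p \<in> P \<Longrightarrow> y p = y' p"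
  then have "merge_rows P y (z k) = merge_rows P y' (z k)" for k
    by (simp add: merge_rows_def vec_eq_iff)
  then show "(\<Sum>k\<in>K. c k * det (merge_rows P y (z k))) = (\<Sum>k\<in>K. c k * det (merge_rows P y' (z k)))"
    by simp
next
  fix p assume p: "p \<in> P"
  have upd: "merge_rows P (y(p := v)) (z k) = (\<chi> i. if i = p then v else merge_rows P y (z k) $ i)"
    for y v k
    using p by (simp add: merge_rows_def vec_eq_iff)
  show "(\<Sum>k\<in>K. c k * det (merge_rows P (y(p := a + b)) (z k))) =
    (\<Sum>k\<in>K. c k * det (merge_rows P (y(p := a)) (z k))) + (\<Sum>k\<in>K. c k * det (merge_rows P (y(p := b)) (z k)))"
    for y a b
    unfolding upd using det_row_add[of p "\<lambda>_. a" "\<lambda>_. b"] by (simp add: distrib_left sum.distrib)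
  show "(\<Sum>k\<in>K. c k * det (merge_rows P (y(p := e *s a)) (z k))) =
    e * (\<Sum>k\<in>K. c k * det (merge_rows P (y(p := a)) (z k)))" for y e a
    unfolding upd using det_row_mul[of p e "\<lambda>_. a"] by (simp add: sum_distrib_left mult.left_commute)
next
  fix p q y assume "p \<in> P" "q \<in> P" "p \<noteq> q" "(y p :: 'a^'n) = y q"
  then have "det (merge_rows P y (z k)) = 0" for k
    by (intro det_identical_rows[of p q]) (simp_all add: merge_rows_def row_def)
  then show "(\<Sum>k\<in>K. c k * det (merge_rows P y (z k))) = 0"
    by simp
qed

lemma det_neq_0_iff_inj_vector_matrix_mult: "det (A::'a::field^'n^'n) \<noteq> 0 \<longleftrightarrow> inj (\<lambda>x. x v* A)"
proof -
  have "(\<lambda>x. x v* A) = (*v) (transpose A)"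
    by (simp add: fun_eq_iff)
  then show ?thesis
    using det_nz_iff_inj_gen[OF matrix_vector_mul_linear_gen[of "transpose A"]] by simp
qed

lemma vector_matrix_mult_merge_rows:
  "x v* merge_rows P y z = (\<Sum>i\<in>P. x $ i *s y i) + (\<Sum>i\<in>-P. x $ i *s z i)"
proof -
  have "x v* merge_rows P y z = (\<Sum>i\<in>P \<union> -P. x $ i *s merge_rows P y z $ i)"
    by (simp add: vec_eq_iff vector_matrix_mult_def mult.commute)
  also have "\<dots> = (\<Sum>i\<in>P. x $ i *s y i) + (\<Sum>i\<in>-P. x $ i *s z i)"
    by (subst sum.union_disjoint) (auto simp: merge_rows_def intro!: arg_cong2[where f = "(+)"] sum.cong)
  finally show ?thesis .
qed

lemma coeffs_eq_0_if_independent_image: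
  fixes y :: "'i \<Rightarrow> 'a::field^'n"
  assumes "finite I" "inj_on y I" "vec.independent (y ` I)" "(\<Sum>i\<in>I. c i *s y i) = 0"
  shows "\<forall>i\<in>I. c i = 0"
proof -
  have "(\<Sum>v\<in>y ` I. c (inv_into I y v) *s v) = (\<Sum>i\<in>I. c i *s y i)"
    using assms(2) by (simp add: sum.reindex)
  then have "c (inv_into I y (y i)) = 0" if "i \<in> I" for i
    using vec.independentD[OF assms(3) _ order.refl, of "\<lambda>v. c (inv_into I y v)" "y i"] assms(1,4) that
    by simp
  then show ?thesis
    using assms(2) by simp
qed

lemma in_span_image_iff_sum:
  fixes y :: "'i \<Rightarrow> 'a::field^'n"
  assumes "finite I" "inj_on y I"
  shows "v \<in> vec.span (y ` I) \<longleftrightarrow> (\<exists>a. v = (\<Sum>i\<in>I. a i *s y i))"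
proof
  assume "v \<in> vec.span (y ` I)"
  then obtain u where "v = (\<Sum>w\<in>y ` I. u w *s w)"
    using vec.span_finite[of "y ` I"] assms(1) by blast
  then show "\<exists>a. v = (\<Sum>i\<in>I. a i *s y i)"
    using assms(2) by (auto simp: sum.reindex)
qed (auto intro: vec.span_sum vec.span_scale vec.span_base)

lemma det_merge_rows_neq_0:
  fixes y z :: "'n::finite \<Rightarrow> 'a::field^'n"
  assumes "inj_on y P" "vec.independent (y ` P)" "inj_on z (-P)" "vec.independent (z ` (-P))"
    and "vec.span (y ` P) \<inter> vec.span (z ` (-P)) \<subseteq> {0}"
  shows "det (merge_rows P y z) \<noteq> 0"
  unfolding det_neq_0_iff_inj_vector_matrix_mult vec.linear_inj_iff_eq_0[OF linear_vector_matrix_mult]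
proof (intro allI impI)
  fix x :: "'a^'n"
  assume "x v* merge_rows P y z = 0"
  then have eq: "(\<Sum>i\<in>P. x $ i *s y i) = - (\<Sum>i\<in>-P. x $ i *s z i)"
    by (simp add: vector_matrix_mult_merge_rows eq_neg_iff_add_eq_0)
  have "(\<Sum>i\<in>-P. x $ i *s z i) \<in> vec.span (z ` (-P))"
    using in_span_image_iff_sum[OF finite assms(3)] by blast
  then have "(\<Sum>i\<in>P. x $ i *s y i) \<in> vec.span (z ` (-P))"
    unfolding eq by (rule vec.span_neg)
  moreover have "(\<Sum>i\<in>P. x $ i *s y i) \<in> vec.span (y ` P)"
    using in_span_image_iff_sum[OF finite assms(1)] by blast
  ultimately have "(\<Sum>i\<in>P. x $ i *s y i) = 0"
    using assms(5) by blast
  moreover from this have "(\<Sum>i\<in>-P. x $ i *s z i) = 0"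
    using eq by simp
  ultimately have "\<forall>i\<in>P. x $ i = 0" "\<forall>i\<in>-P. x $ i = 0"
    using coeffs_eq_0_if_independent_image[OF finite assms(1,2), where c = "\<lambda>i. x $ i"]
      coeffs_eq_0_if_independent_image[OF finite assms(3,4), where c = "\<lambda>i. x $ i"] by simp_all
  then have "x $ i = 0" for i
    by (cases "i \<in> P") auto
  then show "x = 0"
    by (simp add: vec_eq_iff)
qed

lemma det_merge_rows_eq_0:
  fixes y z :: "'n::finite \<Rightarrow> 'a::field^'n"
  assumes "inj_on y P" "inj_on z (-P)"
    and "w \<noteq> 0" "w \<in> vec.span (y ` P)" "w \<in> vec.span (z ` (-P))"
  shows "det (merge_rows P y z) = 0"
proof -
  obtain a b where a: "w = (\<Sum>i\<in>P. a i *s y i)" and b: "w = (\<Sum>i\<in>-P. b i *s z i)"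
    using in_span_image_iff_sum[OF finite assms(1)] in_span_image_iff_sum[OF finite assms(2)] assms(4,5)
    by blast
  define x where "x = (\<chi> i. if i \<in> P then a i else - b i)"
  have "x v* merge_rows P y z = (\<Sum>i\<in>P. a i *s y i) - (\<Sum>i\<in>-P. b i *s z i)"
    by (simp add: vector_matrix_mult_merge_rows x_def sum_negf)
  then have "x v* merge_rows P y z = 0"
    using a b by simp
  moreover have "x \<noteq> 0"
  proof
    assume "x = 0"
    have "a i = 0" if "i \<in> P" for i
    proof -
      have "x $ i = 0"
        using \<open>x = 0\<close> by simp
      then show ?thesis
        using that by (simp add: x_def)
    qed
    then show False
      using a \<open>w \<noteq> 0\<close> by simp
  qed
  ultimately have "\<not> inj (\<lambda>x. x v* merge_rows P y z)"
    unfolding vec.linear_inj_iff_eq_0[OF linear_vector_matrix_mult] by blast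
  then show ?thesis
    using det_neq_0_iff_inj_vector_matrix_mult by blast
qed

lemma exists_indexed_basis:
  fixes V :: "('a::field^'n) set" and I :: "'i set"
  assumes "vec.subspace V" "finite I" "vec.dim V = card I"
  shows "\<exists>y. inj_on y I \<and> vec.independent (y ` I) \<and> vec.span (y ` I) = V"
proof -
  obtain B where B: "B \<subseteq> V" "vec.independent B" "V \<subseteq> vec.span B" "card B = vec.dim V"
    by (rule vec.basis_exists[of V]) simp
  have "finite B"
    using B(2) vec.finiteI_independent by blast
  then obtain h where h: "bij_betw h I B"
    using finite_same_card_bij[OF assms(2) \<open>finite B\<close>] B(4) assms(3) by auto
  have "vec.span B = V"
    using B assms(1) vec.span_minimal by blast
  then show ?thesis
    using h B(2) unfolding bij_betw_def by (intro exI[of _ h]) simp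
qed

lemma triangular_coeffs_eq_0:
  fixes c :: "nat \<Rightarrow> 'a::field"
  assumes sum_eq_0: "\<And>l. l < m \<Longrightarrow> (\<Sum>k<m. c k * D k l) = 0"
    and upper: "\<And>k l. k < l \<Longrightarrow> l < m \<Longrightarrow> D k l = 0"
    and diagonal: "\<And>l. l < m \<Longrightarrow> D l l \<noteq> 0"
  shows "\<forall>k<m. c k = 0"
proof (rule ccontr)
  assume "\<not> (\<forall>k<m. c k = 0)"
  define l where "l = Max {k. k < m \<and> c k \<noteq> 0}"
  have l: "l < m" "c l \<noteq> 0"
    using Max_in[of "{k. k < m \<and> c k \<noteq> 0}"] \<open>\<not> (\<forall>k<m. c k = 0)\<close> unfolding l_def by auto
  have "c k = 0" if "l < k" "k < m" for k
  proof (rule ccontr)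
    assume "c k \<noteq> 0"
    then have "k \<le> l"
      unfolding l_def using that(2) by (intro Max_ge) simp_all
    then show False
      using that(1) by simp
  qed
  then have "(\<Sum>k\<in>{..<m} - {l}. c k * D k l) = 0"
    using upper[OF _ \<open>l < m\<close>] by (intro sum.neutral) (auto simp: nat_neq_iff)
  then have "(\<Sum>k<m. c k * D k l) = c l * D l l"
    using sum.remove[of "{..<m}" l "\<lambda>k. c k * D k l"] l by simp
  then show False
    using sum_eq_0[OF \<open>l < m\<close>] diagonal[OF \<open>l < m\<close>] \<open>c l \<noteq> 0\<close> by simp
qed

lemma independent_family_card_le_support:
  fixes v :: "nat \<Rightarrow> 'a::field^'i"
  assumes indep: "\<And>c. (\<Sum>k<m. c k *s v k) = 0 \<Longrightarrow> \<forall>k<m. c k = 0"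
    and support: "\<And>k i. k < m \<Longrightarrow> i \<notin> R \<Longrightarrow> v k $ i = 0"
  shows "m \<le> card R"
proof -
  have delta: "(\<Sum>i<m. (if i = j then 1 else 0) *s v i) = v j" if "j < m" for j
  proof -
    have "(\<Sum>i<m. (if i = j then 1 else 0) *s v i) = (\<Sum>i<m. if i = j then v i else 0)"
      by (rule sum.cong) simp_all
    then show ?thesis
      using that by simp
  qed
  have "inj_on v {..<m}"
  proof
    fix k l assume kl: "k \<in> {..<m}" "l \<in> {..<m}" "v k = v l"
    define c :: "nat \<Rightarrow> 'a" where "c i = (if i = k then 1 else 0) - (if i = l then 1 else 0)" for i
    have "(\<Sum>i<m. c i *s v i) = (\<Sum>i<m. (if i = k then 1 else 0) *s v i) - (\<Sum>i<m. (if i = l then 1 else 0) *s v i)"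
      unfolding c_def vec.scale_left_diff_distrib sum_subtractf ..
    also have "\<dots> = 0"
      using kl by (simp add: delta)
    finally have "c k = 0"
      using indep kl(1) by blast
    then show "k = l"
      by (simp add: c_def split: if_splits)
  qed
  have independent: "vec.independent (v ` {..<m})"
    unfolding vec.independent_explicit
  proof (intro conjI allI impI)
    fix c assume "(\<Sum>w\<in>v ` {..<m}. c w *s w) = 0"
    then have "(\<Sum>k<m. c (v k) *s v k) = 0"
      using \<open>inj_on v {..<m}\<close> by (simp add: sum.reindex)
    then show "\<forall>w\<in>v ` {..<m}. c w = 0"
      using indep[of "\<lambda>k. c (v k)"] by auto
  qed simp
  have spanned: "v ` {..<m} \<subseteq> vec.span ((\<lambda>i. axis i 1) ` R)"
  proof
    fix w assume "w \<in> v ` {..<m}"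
    then obtain k where "k < m" "w = v k"
      by blast
    have "w = (\<Sum>i\<in>UNIV. (w $ i) *s axis i 1)"
      by (simp add: basis_expansion)
    also have "\<dots> = (\<Sum>i\<in>R. (w $ i) *s axis i 1)"
      using support[OF \<open>k < m\<close>] \<open>w = v k\<close> by (intro sum.mono_neutral_right) auto
    also have "\<dots> \<in> vec.span ((\<lambda>i. axis i 1) ` R)"
      by (intro vec.span_sum vec.span_scale vec.span_base) auto
    finally show "w \<in> vec.span ((\<lambda>i. axis i 1) ` R)" .
  qed
  have "card (v ` {..<m}) \<le> card ((\<lambda>i. axis i (1::'a)) ` R)"
    using vec.independent_span_bound[OF _ independent spanned] by simp
  then show ?thesis
    using card_image[OF \<open>inj_on v {..<m}\<close>] card_image_le[OF finite, of "\<lambda>i. axis i (1::'a)" R] by simp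
qed

text \<open>Lovasz's bound, with the exterior-algebra argument written out in coordinates. Fix \<open>P\<close> with
  \<open>|P| = r\<close> and bases \<open>y l\<close> of \<open>U l\<close> indexed by \<open>P\<close> and \<open>z k\<close> of \<open>W k\<close> indexed by \<open>-P\<close>. The
  alternating forms \<open>y \<mapsto> det (merge_rows P y (z k))\<close> are linearly independent, as their values
  \<open>D k l\<close> at the \<open>y l\<close> form a triangular matrix with nonzero diagonal. Such a form is determined
  by its values at the \<open>d choose r\<close> standard \<open>r\<close>-tuples, which \<open>v k\<close> records.\<close>
lemma skew_subspace_pairs_card_le:
  fixes U W :: "nat \<Rightarrow> ('a::field^'n) set"
  assumes subspace_U: "\<And>k. k < m \<Longrightarrow> vec.subspace (U k)"
    and subspace_W: "\<And>k. k < m \<Longrightarrow> vec.subspace (W k)"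
    and dim_U: "\<And>k. k < m \<Longrightarrow> vec.dim (U k) = r"
    and dim_W: "\<And>k. k < m \<Longrightarrow> vec.dim (W k) = CARD('n) - r"
    and disjoint: "\<And>k. k < m \<Longrightarrow> U k \<inter> W k \<subseteq> {0}"
    and skew: "\<And>k l. k < l \<Longrightarrow> l < m \<Longrightarrow> \<not> U l \<inter> W k \<subseteq> {0}"
    and "r \<le> CARD('n)"
  shows "m \<le> CARD('n) choose r"
proof -
  obtain P :: "'n set" where P: "card P = r"
    using obtain_subset_with_card_n[of r "UNIV :: 'n set"] \<open>r \<le> CARD('n)\<close> by auto
  have "\<forall>k\<in>{..<m}. \<exists>y. inj_on y P \<and> vec.independent (y ` P) \<and> vec.span (y ` P) = U k"
    using subspace_U dim_U P by (auto intro!: exists_indexed_basis)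
  from bchoice[OF this] obtain y
    where y: "\<forall>k\<in>{..<m}. inj_on (y k) P \<and> vec.independent (y k ` P) \<and> vec.span (y k ` P) = U k"
    by blast
  have "\<forall>k\<in>{..<m}. \<exists>z. inj_on z (-P) \<and> vec.independent (z ` (-P)) \<and> vec.span (z ` (-P)) = W k"
    using subspace_W dim_W card_Diff_subset[of P UNIV] P
    by (auto simp: Compl_eq_Diff_UNIV intro!: exists_indexed_basis)
  from bchoice[OF this] obtain z
    where z: "\<forall>k\<in>{..<m}. inj_on (z k) (-P) \<and> vec.independent (z k ` (-P)) \<and> vec.span (z k ` (-P)) = W k"
    by blast
  define D where "D k l = det (merge_rows P (y l) (z k))" for k l
  have upper: "D k l = 0" if kl: "k < l" "l < m" for k l
  proof -
    obtain w where "w \<in> U l" "w \<in> W k" "w \<noteq> 0"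
      using skew[OF kl] by blast
    then show ?thesis
      unfolding D_def using y z kl by (intro det_merge_rows_eq_0[of _ _ _ w]) auto
  qed
  have diagonal: "D l l \<noteq> 0" if "l < m" for l
    unfolding D_def using y z disjoint that by (intro det_merge_rows_neq_0) auto
  define enum where "enum S = (SOME f. bij_betw f P S)" for S :: "'n set"
  have enum: "bij_betw (enum S) P S" if "card S = card P" for S
    unfolding enum_def using finite_same_card_bij[of P S] that by (metis finite someI_ex)
  define v where "v k = (\<chi> S. if card S = r then det (merge_rows P (\<lambda>p. axis (enum S p) 1) (z k)) else 0)"
    for k
  have "\<forall>k<m. c k = 0" if "(\<Sum>k<m. c k *s v k) = 0" for c
  proof (rule triangular_coeffs_eq_0[of m c D])
    have "(\<Sum>k<m. c k * det (merge_rows P (\<lambda>p. axis (enum S p) 1) (z k))) = 0"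
      if "card S = card P" for S
      using arg_cong[OF \<open>(\<Sum>k<m. c k *s v k) = 0\<close>, of "\<lambda>u. u $ S"] that P
      by (simp add: v_def)
    then show "(\<Sum>k<m. c k * D k l) = 0" for l
      unfolding D_def
      using alternating_form.eq_0_if_eq_0_on_enum
        [OF alternating_form_det_merge_rows[where K = "{..<m}" and c = c and z = z] enum]
      by blast
  qed (use upper diagonal in auto)
  then have "m \<le> card {S :: 'n set. card S = r}"
    by (rule independent_family_card_le_support) (auto simp: v_def)
  then show ?thesis
    using n_subsets[of "UNIV :: 'n set" r] by simp
qed

section \<open>Greedy factorizations of a product\<close>

text \<open>\<open>subprod As i j\<close> is the product of the factors with indices \<open>i, ..., j\<close>, counting from 0.\<close>
definition subprod :: "('a::field^'n^'n) list \<Rightarrow> nat \<Rightarrow> nat \<Rightarrow> 'a^'n^'n" where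
  "subprod As i j = mprod (take (j - i + 1) (drop i As))"

lemma mprod_Nil: "mprod [] = mat 1"
  by (simp add: mprod_def)

lemma mprod_Cons: "mprod (x # xs) = x ** mprod xs"
  by (simp add: mprod_def)

lemma mprod_append: "mprod (xs @ ys) = mprod xs ** mprod ys"
  by (induction xs) (simp_all add: mprod_Nil mprod_Cons matrix_mul_assoc)

lemma mprod_in_prods_le: "xs \<noteq> [] \<Longrightarrow> set xs \<subseteq> Z \<Longrightarrow> length xs \<le> N \<Longrightarrow> mprod xs \<in> prods_le Z N"
  unfolding prods_le_def by blast

lemma subprod_same:
  assumes "i < length As"
  shows "subprod As i i = As ! i"
proof -
  have "drop i As = As ! i # drop (Suc i) As"
    using assms by (rule Cons_nth_drop_Suc[symmetric])
  then show ?thesis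
    by (simp add: subprod_def mprod_Cons mprod_Nil)
qed

lemma mprod_drop_eq_subprod:
  assumes "i \<le> j"
  shows "mprod (drop i As) = subprod As i j ** mprod (drop (Suc j) As)"
proof -
  have "drop (j - i + 1) (drop i As) = drop (Suc j) As"
    using assms by simp
  then have "drop i As = take (j - i + 1) (drop i As) @ drop (Suc j) As"
    by (metis append_take_drop_id)
  then show ?thesis
    unfolding subprod_def by (metis mprod_append)
qed

lemma mprod_take_eq_subprod:
  assumes "i \<le> j"
  shows "mprod (take (Suc j) As) = mprod (take i As) ** subprod As i j"
proof -
  have "take (Suc j) As = take i As @ take (j - i + 1) (drop i As)"
    using assms by (metis Suc_eq_plus1 add.commute le_add_diff_inverse2 take_add add_Suc_right)
  then show ?thesis
    unfolding subprod_def by (metis mprod_append)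
qed

lemma mprod_eq_subprod:
  assumes "i \<le> j"
  shows "mprod As = mprod (take i As) ** subprod As i j ** mprod (drop (Suc j) As)"
proof -
  have "mprod As = mprod (take i As) ** mprod (drop i As)"
    by (simp flip: mprod_append)
  also have "\<dots> = mprod (take i As) ** (subprod As i j ** mprod (drop (Suc j) As))"
    by (simp only: mprod_drop_eq_subprod[OF assms, of As])
  finally show ?thesis
    by (simp add: matrix_mul_assoc)
qed

lemma rank_mprod_le_rank_subprod:
  assumes "i \<le> j"
  shows "rank (mprod As) \<le> rank (subprod As i j)"
proof -
  have "rank (mprod As) \<le> rank (mprod (take i As) ** subprod As i j)"
    unfolding mprod_eq_subprod[OF assms, of As] by (rule rank_mul_le_left_gen)
  also have "\<dots> \<le> rank (subprod As i j)"
    by (rule rank_mul_le_right_gen)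
  finally show ?thesis .
qed

lemma subprod_in_gen_semigroup:
  "i \<le> j \<Longrightarrow> j < length As \<Longrightarrow> set As \<subseteq> X \<Longrightarrow> subprod As i j \<in> gen_semigroup X"
  unfolding gen_semigroup_def subprod_def
  by (intro CollectI exI[of _ "take (j - i + 1) (drop i As)"])
    (auto dest: in_set_takeD in_set_dropD)

lemma greedy_cuts_exist:
  assumes single: "\<And>i. i < length As \<Longrightarrow> As ! i \<in> Z" and "i \<le> length As"
  shows "\<exists>c p xs. c 0 = i \<and> c p = length As \<and> (\<forall>s<p. c s < c (Suc s)) \<and>
    (\<forall>s<p. \<forall>j. c (Suc s) \<le> j \<and> j < length As \<longrightarrow> subprod As (c s) j \<notin> Z) \<and>
    length xs = p \<and> set xs \<subseteq> Z \<and> mprod (drop i As) = mprod xs"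
  using \<open>i \<le> length As\<close>
proof (induction "length As - i" arbitrary: i rule: less_induct)
  case less
  show ?case
  proof (cases "i = length As")
    case True
    then show ?thesis
      by (intro exI[of _ "\<lambda>_. i"] exI[of _ 0] exI[of _ "[]"]) (simp add: mprod_Nil)
  next
    case False
    define J where "J = {j. i \<le> j \<and> j < length As \<and> subprod As i j \<in> Z}"
    define j where "j = Max J"
    have "finite J" "i \<in> J"
      using False less.prems single[of i] by (auto simp: J_def subprod_same)
    then have "j \<in> J"
      unfolding j_def by (intro Max_in) auto
    then have j: "i \<le> j" "j < length As" "subprod As i j \<in> Z"
      by (simp_all add: J_def)
    have maximal: "subprod As i j' \<notin> Z" if "Suc j \<le> j'" "j' < length As" for j'
    proof
      assume "subprod As i j' \<in> Z"
      then have "j' \<in> J"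
        using that j(1) by (simp add: J_def)
      then have "j' \<le> j"
        unfolding j_def by (rule Max_ge[OF \<open>finite J\<close>])
      then show False
        using that(1) by simp
    qed
    have "length As - Suc j < length As - i"
      using j by simp
    from less.hyps[OF this Suc_leI[OF j(2)]] obtain c p xs
      where c: "c 0 = Suc j" "c p = length As" "\<forall>s<p. c s < c (Suc s)"
        "\<forall>s<p. \<forall>j. c (Suc s) \<le> j \<and> j < length As \<longrightarrow> subprod As (c s) j \<notin> Z"
        "length xs = p" "set xs \<subseteq> Z" "mprod (drop (Suc j) As) = mprod xs"
      by blast
    define c' where "c' s = (case s of 0 \<Rightarrow> i | Suc s \<Rightarrow> c s)" for s
    have c': "c' 0 = i" "c' (Suc s) = c s" for s
      by (simp_all add: c'_def)
    have "mprod (drop i As) = subprod As i j ** mprod (drop (Suc j) As)"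
      by (rule mprod_drop_eq_subprod[OF j(1)])
    then have "mprod (drop i As) = mprod (subprod As i j # xs)"
      using c(7) by (simp add: mprod_Cons)
    moreover have "c' s < c' (Suc s)" if "s < Suc p" for s
      using c(1,3) j(1) that by (cases s) (simp_all add: c')
    moreover have "subprod As (c' s) j' \<notin> Z" if "s < Suc p" "c' (Suc s) \<le> j'" "j' < length As" for s j'
      using c(1,4) maximal that by (cases s) (simp_all add: c')
    ultimately show ?thesis
      using c j(3) by (intro exI[of _ c'] exI[of _ "Suc p"] exI[of _ "subprod As i j # xs"]) (simp add: c')
  qed
qed

text \<open>Segment \<open>s\<close> of \<open>As\<close> consists of the factors with indices \<open>c s, ..., c (Suc s) - 1\<close>.\<close>
locale greedy_cuts =
  fixes As :: "('a::field^'n^'n) list" and Z :: "('a^'n^'n) set" and c :: "nat \<Rightarrow> nat" and p :: nat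
  assumes first_cut: "c 0 = 0" and last_cut: "c p = length As"
    and cut_increasing: "\<And>s. s < p \<Longrightarrow> c s < c (Suc s)"
    and segment_maximal: "\<And>s j. s < p \<Longrightarrow> c (Suc s) \<le> j \<Longrightarrow> j < length As \<Longrightarrow> subprod As (c s) j \<notin> Z"
begin

lemma cut_less: "s < t \<Longrightarrow> t \<le> p \<Longrightarrow> c s < c t"
proof (induction t)
  case (Suc t)
  then show ?case
    using cut_increasing[of t] by (cases "s = t") auto
qed simp

lemma cut_le_length: "s \<le> p \<Longrightarrow> c s \<le> length As"
  using cut_less[of s p] last_cut by (cases "s = p") auto

lemma subprod_between_cuts_notin: "s + 2 \<le> t \<Longrightarrow> t \<le> p \<Longrightarrow> subprod As (c s) (c t - 1) \<notin> Z"
  using segment_maximal[of s "c t - 1"] cut_less[of "Suc s" t] cut_le_length[of t] by simp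

end

locale rank_greedy_cuts = greedy_cuts As Z c p
  for As :: "('a::field^'n^'n) list" and Z c p +
  fixes r :: nat
  assumes rank_mprod: "rank (mprod As) = r"
    and high_rank_subprod_in: "\<And>i j. i \<le> j \<Longrightarrow> j < length As \<Longrightarrow> r < rank (subprod As i j) \<Longrightarrow>
      subprod As i j \<in> Z"
    and regular_subprod_in: "\<And>i j. i < j \<Longrightarrow> j < length As \<Longrightarrow> rank (subprod As i j) = r \<Longrightarrow>
      completely_pseudo_regular (subprod As i j) \<Longrightarrow> subprod As i j \<in> Z"
begin

lemma rank_between_cuts:
  assumes "s + 2 \<le> t" "t \<le> p"
  shows "rank (subprod As (c s) (c t - 1)) = r"
proof -
  have "c s \<le> c t - 1" "c t - 1 < length As"
    using cut_less[of s t] cut_le_length[of t] assms by auto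
  then show ?thesis
    using rank_mprod_le_rank_subprod[of "c s" "c t - 1" As] rank_mprod
      high_rank_subprod_in[of "c s" "c t - 1"] subprod_between_cuts_notin[OF assms]
    by (meson antisym not_le)
qed

lemma rank_prefix: "2 \<le> t \<Longrightarrow> t \<le> p \<Longrightarrow> rank (mprod (take (c t) As)) = r"
  using rank_between_cuts[of 0 t] cut_less[of 0 t] first_cut by (simp add: subprod_def)

lemma rank_suffix: "s + 2 \<le> p \<Longrightarrow> rank (mprod (drop (c s) As)) = r"
  using rank_between_cuts[of s p] last_cut cut_less[of s p] by (simp add: subprod_def)

lemma prefix_inter_suffix_trivial:
  assumes "2 \<le> s" "s + 2 \<le> p"
  shows "row_space (mprod (take (c s) As)) \<inter> left_null_space (mprod (drop (c s) As)) \<subseteq> {0}"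
proof (rule row_space_inter_left_null_space_mult)
  show "rank (mprod (take (c s) As) ** mprod (drop (c s) As)) = rank (mprod (take (c s) As))"
    using rank_mprod rank_prefix[of s] assms by (simp flip: mprod_append)
qed

lemma prefix_inter_earlier_suffix_nontrivial:
  assumes "2 \<le> s'" "s' + 2 \<le> s" "s + 2 \<le> p"
  shows "\<not> row_space (mprod (take (c s) As)) \<inter> left_null_space (mprod (drop (c s') As)) \<subseteq> {0}"
proof -
  define M where "M = subprod As (c s') (c s - 1)"
  have rank_M: "rank M = r" and "M \<notin> Z"
    using rank_between_cuts subprod_between_cuts_notin assms by (simp_all add: M_def)
  have cuts: "c s' < c s - 1" "c s - 1 < length As"
    using cut_less[of s' "Suc s'"] cut_less[of "Suc s'" s] cut_le_length[of s] cut_less[of s p] assms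
    by auto
  then have "\<not> completely_pseudo_regular M"
    using regular_subprod_in rank_M \<open>M \<notin> Z\<close> by (auto simp: M_def)
  then have "\<not> row_space M \<inter> left_null_space M \<subseteq> {0}"
    using completely_pseudo_regularI_row_space by blast
  moreover have "mprod (take (c s) As) = mprod (take (c s') As) ** M"
    using mprod_take_eq_subprod[of "c s'" "c s - 1" As] cuts by (simp add: M_def)
  moreover have "mprod (drop (c s') As) = M ** mprod (drop (c s) As)"
    using mprod_drop_eq_subprod[of "c s'" "c s - 1" As] cuts by (simp add: M_def)
  moreover have "row_space (mprod (take (c s') As) ** M) = row_space M"
    using rank_prefix[of s] rank_M assms calculation(2) by (intro row_space_mult_eq) simp
  moreover have "left_null_space (M ** mprod (drop (c s) As)) = left_null_space M"
    using rank_suffix[of s'] rank_M assms calculation(3) by (intro left_null_space_mult_eq) simp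
  ultimately show ?thesis
    by simp
qed

lemma number_of_cuts_le: "p \<le> 2 * (CARD('n) choose r) + 3"
proof (rule ccontr)
  assume long: "\<not> p \<le> 2 * (CARD('n) choose r) + 3"
  let ?U = "\<lambda>k. row_space (mprod (take (c (2 * k + 2)) As))"
  let ?W = "\<lambda>k. left_null_space (mprod (drop (c (2 * k + 2)) As))"
  have "Suc (CARD('n) choose r) \<le> CARD('n) choose r"
  proof (rule skew_subspace_pairs_card_le[of _ ?U ?W])
    fix k assume "k < Suc (CARD('n) choose r)"
    then have "2 * k + 2 + 2 \<le> p"
      using long by simp
    then show "vec.subspace (?U k)" "vec.subspace (?W k)" "vec.dim (?U k) = r"
      "vec.dim (?W k) = CARD('n) - r" "?U k \<inter> ?W k \<subseteq> {0}"
      using rank_prefix rank_suffix prefix_inter_suffix_trivial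
      by (simp_all add: subspace_row_space subspace_left_null_space dim_left_null_space
          flip: rank_eq_dim_row_space)
  next
    fix k l assume "k < l" "l < Suc (CARD('n) choose r)"
    then show "\<not> ?U l \<inter> ?W k \<subseteq> {0}"
      using long by (intro prefix_inter_earlier_suffix_nontrivial) simp_all
  qed (use rank_le_card[of "mprod As"] rank_mprod in simp)
  then show False
    by simp
qed

end

theorem lemmaV15:
  fixes X Y T :: "('a::field_char_0^'n^'n) set"
    and r :: nat
    and As :: "('a^'n^'n) list"
  assumes K: "number_field TYPE('a)"
    and X_closed: "lz_closed X"
    and Y_closed: "lz_closed Y"
    and T_closed: "lz_closed T"
    and XY: "X \<union> {B \<in> gen_semigroup X. rank B > r} \<subseteq> Y"
    and As_ne: "As \<noteq> []"
    and As_X: "set As \<subseteq> X"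
    and notY': "mprod As \<notin> lz_closure (prods_le (Y \<union> T) (2 * (CARD('n) choose r) + 3))"
    and rankA: "rank (mprod As) \<ge> r"
  shows "\<exists>k l. k < l \<and> l < length As \<and>
           completely_pseudo_regular (mprod (take (l - k + 1) (drop k As))) \<and>
           rank (mprod (take (l - k + 1) (drop k As))) = r \<and>
           mprod (take (l - k + 1) (drop k As)) \<notin> Y \<union> T"
proof (rule ccontr)
  assume no_segment: "\<not> ?thesis"
  define Z N where "Z = Y \<union> T" and "N = 2 * (CARD('n) choose r) + 3"
  have not_short: "mprod As \<notin> prods_le Z N"
    using notY' unfolding Z_def N_def lz_closure_def by blast
  have high_rank_in_Z: "B \<in> Z" if "B \<in> gen_semigroup X" "r < rank B" for B
    using XY that by (auto simp: Z_def)
  have "mprod As \<in> gen_semigroup X"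
    using As_ne As_X by (auto simp: gen_semigroup_def)
  then have rank_As: "rank (mprod As) = r"
    using rankA high_rank_in_Z not_short mprod_in_prods_le[of "[mprod As]" Z N]
    by (fastforce simp: N_def mprod_Cons mprod_Nil)
  have single: "As ! i \<in> Z" if "i < length As" for i
    using nth_mem[OF that] As_X XY by (auto simp: Z_def)
  obtain c p xs where "c 0 = 0" "c p = length As" "\<forall>s<p. c s < c (Suc s)"
    "\<forall>s<p. \<forall>j. c (Suc s) \<le> j \<and> j < length As \<longrightarrow> subprod As (c s) j \<notin> Z"
    and xs: "length xs = p" "set xs \<subseteq> Z" "mprod As = mprod xs"
    using greedy_cuts_exist[OF single, of 0] by auto
  then interpret rank_greedy_cuts As Z c p r
    using rank_As high_rank_in_Z subprod_in_gen_semigroup[OF _ _ As_X] no_segment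
    by unfold_locales (auto simp: subprod_def Z_def)
  have "xs \<noteq> []"
    using xs(1) \<open>c 0 = 0\<close> \<open>c p = length As\<close> As_ne by auto
  then show False
    using not_short mprod_in_prods_le[of xs Z N] xs number_of_cuts_le by (simp add: N_def)
qed

end
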